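(* Let $\mathfrak{g}$ be a real nilpotent Lie algebra of dimension $2n$ with nilindex $m=\mathrm{nil}(\mathfrak{g})$, and suppose $\mathfrak{g}$ carries a (left-invariant) generalized complex structure of type $k>1$. Suppose there is an integer $j>0$ such that $\dim(V_{i+1}/V_i)=1$ for all $i$ with $j\le i\le m-1$. Then $$k\le \begin{cases} 2n-\mathrm{nil}(\mathfrak{g})+j-2 & \text{if } j>1,\\ 2n-\mathrm{nil}(\mathfrak{g}) & \text{if } j=1.\end{cases}$$
   Context: Lower central series: $\mathfrak{g}^0=\mathfrak{g}$, $\mathfrak{g}^i=[\mathfrak{g}^{i-1},\mathfrak{g}]$; the nilindex $m=\mathrm{nil}(\mathfrak{g})$ is the least $m$ with $\mathfrak{g}^m=0$. For $i\ge 0$, $V_i\subset\mathfrak{g}^*$ is the annihilator of $\mathfrak{g}^i$, so $V_0=0$ and $V_m=\mathfrak{g}^*$. The differential $d$ on $\Lambda\mathfrak{g}^*$ is the Chevalley–Eilenberg differential, e.g. $d\alpha(X,Y)=-\alpha([X,Y])$ for $\alpha\in\mathfrak{g}^*$. On $\mathfrak{g}\oplus\mathfrak{g}^*$ the Courant bracket is $[X+\xi,Y+\eta]_c=[X,Y]+I_X d\eta-I_Y d\xi$ (here $I$ is interior product; this is the Courant bracket for left-invariant objects), and the inner product is $\langle X+\xi,Y+\eta\rangle=\tfrac12(\xi(Y)+\eta(X))$. A generalized complex structure on $\mathfrak{g}$ is a linear map $\mathcal{J}$ of $\mathfrak{g}\oplus\mathfrak{g}^*$ with $\mathcal{J}^2=-\mathrm{Id}$,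 orthogonal for $\langle\,,\rangle$, whose $+i$-eigenspace $L\subset(\mathfrak{g}\oplus\mathfrak{g}^* )\otimes\mathbb{C}$ is closed under the (complexified) Courant bracket. Its type $k$ is the complex codimension in $\mathfrak{g}\otimes\mathbb{C}$ of the projection of $L$ onto $\mathfrak{g}\otimes\mathbb{C}$. *)

theory Defs
  imports "HOL-Analysis.Analysis"
begin

text \<open>A finite-dimensional real Lie algebra is modelled on a Euclidean space type 'a
  (only its real vector space structure is used; the inner product serves only to
  identify the dual space with 'a: a vector xi represents the functional Y |-> xi . Y).\<close>

definition lie_algebra :: "('a::euclidean_space \<Rightarrow> 'a \<Rightarrow> 'a) \<Rightarrow> bool" where
  "lie_algebra br \<longleftrightarrow> bilinear br \<and> (\<forall>x. br x x = 0) \<and>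
     (\<forall>x y z. br x (br y z) + br y (br z x) + br z (br x y) = 0)"

fun lcs :: "('a::euclidean_space \<Rightarrow> 'a \<Rightarrow> 'a) \<Rightarrow> nat \<Rightarrow> 'a set" where
  "lcs br 0 = UNIV"
| "lcs br (Suc i) = span {br x y | x y. x \<in> lcs br i}"

definition nilpotent_lie :: "('a::euclidean_space \<Rightarrow> 'a \<Rightarrow> 'a) \<Rightarrow> bool" where
  "nilpotent_lie br \<longleftrightarrow> (\<exists>m. lcs br m = {0})"

definition nilindex :: "('a::euclidean_space \<Rightarrow> 'a \<Rightarrow> 'a) \<Rightarrow> nat" where
  "nilindex br = (LEAST m. lcs br m = {0})"

text \<open>V_i = annihilator of g^i in g* (dual identified with 'a).\<close>
definition annV :: "('a::euclidean_space \<Rightarrow> 'a \<Rightarrow> 'a) \<Rightarrow> nat \<Rightarrow> 'a set" where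
  "annV br i = {xi. \<forall>x\<in>lcs br i. xi \<bullet> x = 0}"

text \<open>Elements of g + g* are pairs (X, xi). Interior product of the Chevalley-Eilenberg
  differential: (I_X d eta)(Y) = d eta (X,Y) = - eta([X,Y]), represented by the vector
  - adjoint (br X) eta.\<close>
definition courant :: "('a::euclidean_space \<Rightarrow> 'a \<Rightarrow> 'a) \<Rightarrow> 'a \<times> 'a \<Rightarrow> 'a \<times> 'a \<Rightarrow> 'a \<times> 'a" where
  "courant br u v = (br (fst u) (fst v),
      - adjoint (br (fst u)) (snd v) + adjoint (br (fst v)) (snd u))"

definition pairing :: "('a::euclidean_space) \<times> 'a \<Rightarrow> 'a \<times> 'a \<Rightarrow> real" where
  "pairing u v = (snd u \<bullet> fst v + snd v \<bullet> fst u) / 2"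

text \<open>Complexification: an element a + i b of (g + g*) (x) C is the pair (a, b).
  Complex-bilinear extension of the Courant bracket.\<close>
definition ccourant :: "('a::euclidean_space \<Rightarrow> 'a \<Rightarrow> 'a) \<Rightarrow>
    ('a \<times> 'a) \<times> ('a \<times> 'a) \<Rightarrow> ('a \<times> 'a) \<times> ('a \<times> 'a) \<Rightarrow> ('a \<times> 'a) \<times> ('a \<times> 'a)" where
  "ccourant br p q = (courant br (fst p) (fst q) - courant br (snd p) (snd q),
                      courant br (fst p) (snd q) + courant br (snd p) (fst q))"

text \<open>+i eigenspace of the complex-linear extension of J: {u - i J u}.\<close>
definition eigL :: "('a::euclidean_space \<times> 'a \<Rightarrow> 'a \<times> 'a) \<Rightarrow> (('a \<times> 'a) \<times> ('a \<times> 'a)) set" where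
  "eigL J = {(u, - J u) | u. True}"

definition gen_complex_structure ::
    "('a::euclidean_space \<Rightarrow> 'a \<Rightarrow> 'a) \<Rightarrow> ('a \<times> 'a \<Rightarrow> 'a \<times> 'a) \<Rightarrow> bool" where
  "gen_complex_structure br J \<longleftrightarrow> linear J \<and> (\<forall>u. J (J u) = - u) \<and>
     (\<forall>u v. pairing (J u) (J v) = pairing u v) \<and>
     (\<forall>p\<in>eigL J. \<forall>q\<in>eigL J. ccourant br p q \<in> eigL J)"

text \<open>Projection of L onto g (x) C (as a real subspace of g x g), and the type:
  complex codimension = DIM g - (real dimension of the projection) / 2.\<close>
definition projL :: "('a::euclidean_space \<times> 'a \<Rightarrow> 'a \<times> 'a) \<Rightarrow> ('a \<times> 'a) set" where
  "projL J = (\<lambda>p. (fst (fst p), fst (snd p))) ` eigL J"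

definition gc_type :: "('a::euclidean_space \<times> 'a \<Rightarrow> 'a \<times> 'a) \<Rightarrow> nat" where
  "gc_type J = DIM('a) - dim (projL J) div 2"

end

theory Submission
  imports Defs
begin

text \<open>Let P be the projection of L to g \<otimes> \<complex>: a complex subalgebra with P + cj P = g \<otimes> \<complex>
  and complex codimension k, so that P \<inter> cj P has complex dimension 2n - 2k.
  Because the layers g^i / g^(i+1), i \<ge> j, are one-dimensional, an element of P lying in
  g^i \<otimes> \<complex> but not in g^(i+1) \<otimes> \<complex> can be bracketed with P down the series, which forces
  g^i \<otimes> \<complex> \<subseteq> P; consequently P \<inter> (g^j \<otimes> \<complex>) \<subseteq> cj P.
  If g^j \<otimes> \<complex> \<subseteq> P this bounds P \<inter> cj P from below directly. Otherwise
  Q = P + g^j \<otimes> \<complex> is a complex subalgebra not containing g^(j-1) \<otimes> \<complex>, and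
  P \<inter> (g^j \<otimes> \<complex>) \<subseteq> P \<inter> cj P bounds its dimension. The extra 1 for j > 1 comes from
  dim g^2 < dim g^1 \<le> 2n - 2 and from the fact that a complex subalgebra of complex codimension
  one contains [g, g] \<otimes> \<complex>.\<close>

section \<open>Complexification\<close>

definition ii :: "'a::real_vector \<times> 'a \<Rightarrow> 'a \<times> 'a" where
  "ii p = (- snd p, fst p)"

definition cj :: "'a::real_vector \<times> 'a \<Rightarrow> 'a \<times> 'a" where
  "cj p = (fst p, - snd p)"

definition cbr :: "('a::real_vector \<Rightarrow> 'a \<Rightarrow> 'a) \<Rightarrow> 'a \<times> 'a \<Rightarrow> 'a \<times> 'a \<Rightarrow> 'a \<times> 'a" where
  "cbr br p q = (br (fst p) (fst q) - br (snd p) (snd q), br (fst p) (snd q) + br (snd p) (fst q))"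

definition complex_subspace :: "('a::real_vector \<times> 'a) set \<Rightarrow> bool" where
  "complex_subspace Q \<longleftrightarrow> subspace Q \<and> (\<forall>p\<in>Q. ii p \<in> Q)"

definition complex_subalgebra :: "('a::real_vector \<Rightarrow> 'a \<Rightarrow> 'a) \<Rightarrow> ('a \<times> 'a) set \<Rightarrow> bool" where
  "complex_subalgebra br Q \<longleftrightarrow> complex_subspace Q \<and> (\<forall>p\<in>Q. \<forall>q\<in>Q. cbr br p q \<in> Q)"

lemma ii_ii [simp]: "ii (ii p) = - p"
  by (simp add: ii_def prod_eq_iff)

lemma cj_cj [simp]: "cj (cj p) = p"
  by (simp add: cj_def)

lemma linear_ii: "linear ii"
  by (rule linearI) (auto simp: ii_def algebra_simps)

lemma linear_cj: "linear cj"
  by (rule linearI) (auto simp: cj_def algebra_simps)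

lemma ii_mem_Times: "p \<in> S \<times> S \<Longrightarrow> subspace S \<Longrightarrow> ii p \<in> S \<times> S"
  by (auto simp: ii_def subspace_neg)

lemma cj_mem_Times: "p \<in> S \<times> S \<Longrightarrow> subspace S \<Longrightarrow> cj p \<in> S \<times> S"
  by (auto simp: cj_def subspace_neg)

lemma complex_subspace_Times: "subspace S \<Longrightarrow> complex_subspace (S \<times> S)"
  by (simp add: complex_subspace_def subspace_Times ii_mem_Times)

lemma complex_subspace_sums:
  "complex_subspace A \<Longrightarrow> complex_subspace B \<Longrightarrow> complex_subspace {x + y | x y. x \<in> A \<and> y \<in> B}"
proof -
  assume A: "complex_subspace A" and B: "complex_subspace B"
  have "ii (x + y) \<in> {x + y | x y. x \<in> A \<and> y \<in> B}" if "x \<in> A" "y \<in> B" for x y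
  proof -
    have "ii (x + y) = ii x + ii y" by (rule linear_add[OF linear_ii])
    moreover have "ii x \<in> A" "ii y \<in> B" using A B that by (auto simp: complex_subspace_def)
    ultimately show ?thesis by blast
  qed
  moreover have "subspace {x + y | x y. x \<in> A \<and> y \<in> B}"
    using A B by (intro subspace_sums) (simp_all add: complex_subspace_def)
  ultimately show ?thesis
    unfolding complex_subspace_def by blast
qed

lemma inner_ii_right: "(x::'a::real_inner \<times> 'a) \<bullet> ii y = - (ii x \<bullet> y)"
  by (cases x, cases y) (simp add: ii_def inner_commute)

lemma inner_ii_self: "(x::'a::real_inner \<times> 'a) \<bullet> ii x = 0"
  using inner_ii_right[of x x] by (cases x) (simp add: ii_def inner_commute)

lemma independent_ii_pair:
  fixes p :: "'a::euclidean_space \<times> 'a"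
  assumes "p \<noteq> 0"
  shows "independent {p, ii p}" "p \<noteq> ii p"
proof -
  have pp: "p \<bullet> p \<noteq> 0" using assms by simp
  then show ne: "p \<noteq> ii p" using inner_ii_self[of p] by metis
  have "ii p \<noteq> 0" using assms by (cases p) (auto simp: ii_def zero_prod_def)
  moreover have "p \<notin> span {ii p}"
  proof
    assume "p \<in> span {ii p}"
    then obtain c where "p = c *\<^sub>R ii p" by (auto simp: span_singleton)
    then have "p \<bullet> p = c * (p \<bullet> ii p)" by (metis inner_scaleR_right)
    then show False using pp inner_ii_self[of p] by simp
  qed
  ultimately show "independent {p, ii p}" using ne by (simp add: independent_insert)
qed

lemma span_ii_pair_closed:
  assumes "x \<in> span {p, ii p}"
  shows "ii x \<in> span {p, ii p}"
proof -
  obtain a b where "x = a *\<^sub>R p + b *\<^sub>R ii p"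
    using assms by (auto simp: span_insert span_singleton algebra_simps)
  then have "ii x = a *\<^sub>R ii p - b *\<^sub>R p"
    by (simp add: linear_add[OF linear_ii] linear_scale[OF linear_ii])
  then show ?thesis by (simp add: span_base span_diff span_scale)
qed

lemma complex_subspace_plus_conj:
  assumes P: "complex_subspace P" and fst_surj: "\<And>a. \<exists>b. (a, b) \<in> P"
  shows "\<exists>p\<in>P. \<exists>q\<in>P. x = p + cj q"
proof -
  have Ps: "subspace P" and Pii: "\<And>p. p \<in> P \<Longrightarrow> ii p \<in> P"
    using P by (auto simp: complex_subspace_def)
  obtain a b where x: "x = (a, b)" by (cases x)
  obtain c d where cd: "(a, c) \<in> P" "(b, d) \<in> P" using fst_surj by blast
  define p where "p = (1/2) *\<^sub>R (a, c) + (1/2) *\<^sub>R ii (b, d)"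
  define q where "q = (1/2) *\<^sub>R (a, c) - (1/2) *\<^sub>R ii (b, d)"
  have "p \<in> P" unfolding p_def
    by (rule subspace_add[OF Ps subspace_scale[OF Ps cd(1)] subspace_scale[OF Ps Pii[OF cd(2)]]])
  moreover have "q \<in> P" unfolding q_def
    by (rule subspace_diff[OF Ps subspace_scale[OF Ps cd(1)] subspace_scale[OF Ps Pii[OF cd(2)]]])
  moreover have "x = p + cj q"
    unfolding x p_def q_def ii_def cj_def by (simp add: scaleR_2[symmetric] flip: scaleR_add_left)
  ultimately show ?thesis by blast
qed

lemma ii_notin_span_insert:
  assumes Q: "complex_subspace Q" and x: "x \<notin> Q"
  shows "ii x \<notin> span (insert x Q)"
proof
  have Qs: "subspace Q" and Qii: "\<And>p. p \<in> Q \<Longrightarrow> ii p \<in> Q"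
    using Q by (auto simp: complex_subspace_def)
  assume "ii x \<in> span (insert x Q)"
  then obtain c where c: "ii x - c *\<^sub>R x \<in> Q"
    unfolding span_breakdown_eq using Qs span_eq_iff by blast
  have "ii (ii x - c *\<^sub>R x) + c *\<^sub>R (ii x - c *\<^sub>R x) = - ((1 + c * c) *\<^sub>R x)"
    by (simp add: linear_diff[OF linear_ii] linear_scale[OF linear_ii] algebra_simps)
  moreover have "ii (ii x - c *\<^sub>R x) + c *\<^sub>R (ii x - c *\<^sub>R x) \<in> Q"
    using c Qii by (intro subspace_add[OF Qs] subspace_scale[OF Qs]) auto
  ultimately have "(1 + c * c) *\<^sub>R x \<in> Q" using subspace_neg[OF Qs] by fastforce
  then have "(1 / (1 + c * c)) *\<^sub>R ((1 + c * c) *\<^sub>R x) \<in> Q" by (rule subspace_scale[OF Qs])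
  moreover have "1 + c * c \<noteq> 0" by (metis add_pos_nonneg zero_le_square zero_less_one less_irrefl)
  ultimately show False using x by simp
qed

text \<open>Split off span {p, ii p} and pass to its orthogonal complement, which is again complex
  because ii is skew-adjoint.\<close>

lemma even_dim_complex_subspace:
  fixes Q :: "('a::euclidean_space \<times> 'a) set"
  assumes "complex_subspace Q"
  shows "even (dim Q)"
  using assms
proof (induction "dim Q" arbitrary: Q rule: less_induct)
  case less
  then have Qs: "subspace Q" and Qii: "\<And>p. p \<in> Q \<Longrightarrow> ii p \<in> Q"
    by (auto simp: complex_subspace_def)
  show ?case
  proof (cases "Q \<subseteq> {0}")
    case True
    then show ?thesis by (simp add: dim_eq_0[THEN iffD2])
  next
    case False
    then obtain p where p: "p \<in> Q" "p \<noteq> 0" by blast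
    define A where "A = span {p, ii p}"
    define Q' where "Q' = {y \<in> Q. \<forall>x\<in>A. orthogonal x y}"
    have "A \<subseteq> Q" unfolding A_def using p Qii Qs by (intro span_minimal) auto
    then have dimQ: "dim Q' + dim A = dim Q"
      unfolding Q'_def A_def using Qs by (intro dim_subspace_orthogonal_to_vectors) auto
    have dimA: "dim A = 2"
      unfolding A_def using independent_ii_pair[OF p(2)] by (simp add: dim_eq_card_independent)
    have "complex_subspace Q'"
      unfolding complex_subspace_def
    proof
      have "Q' = Q \<inter> {y. \<forall>x\<in>A. orthogonal x y}" unfolding Q'_def by blast
      then show "subspace Q'" using subspace_inter Qs subspace_orthogonal_to_vectors by metis
      show "\<forall>y\<in>Q'. ii y \<in> Q'"
      proof
        fix y assume y: "y \<in> Q'"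
        have "orthogonal x (ii y)" if "x \<in> A" for x
        proof -
          have "ii x \<in> A" using span_ii_pair_closed that unfolding A_def by blast
          then have "orthogonal (ii x) y" using y unfolding Q'_def by blast
          then show ?thesis unfolding orthogonal_def using inner_ii_right[of x y] by simp
        qed
        moreover have "ii y \<in> Q" using y Qii unfolding Q'_def by blast
        ultimately show "ii y \<in> Q'" unfolding Q'_def by blast
      qed
    qed
    then have "even (dim Q')" using less.hyps dimQ dimA by simp
    then show ?thesis using dimQ dimA by (metis even_add even_numeral)
  qed
qed

lemma exists_last_index:
  assumes "j \<le> m" "Q j" "\<not> Q m"
  shows "\<exists>i. j \<le> i \<and> i < m \<and> Q i \<and> \<not> Q (Suc i)"
  using assms
proof (induction m rule: dec_induct)
  case (step m)
  show ?case
  proof (cases "Q m")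
    case True
    then show ?thesis using step.hyps(1) step.prems(2) by blast
  next
    case False
    then show ?thesis using step.IH step.prems(1) by (meson less_SucI)
  qed
qed simp

lemma obtain_codim_one_generator:
  fixes S T :: "'a::euclidean_space set"
  assumes S: "subspace S" and T: "subspace T" and "T \<subseteq> S" and codim: "dim S = dim T + 1"
  obtains w where "w \<in> S" "\<And>x. x \<in> S \<Longrightarrow> \<exists>c. x - c *\<^sub>R w \<in> T"
proof -
  have spanT: "span T = T" using T by (rule span_eq_iff[THEN iffD2])
  have "\<not> S \<subseteq> T"
  proof
    assume "S \<subseteq> T"
    then have "dim S \<le> dim T" by (rule dim_subset)
    with codim show False by simp
  qed
  then obtain w where w: "w \<in> S" "w \<notin> span T" using spanT by blast
  have "span (insert w T) \<subseteq> S"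
    using w(1) \<open>T \<subseteq> S\<close> by (intro span_minimal[OF _ S]) auto
  moreover have "dim S \<le> dim (span (insert w T))"
    using w(2) codim by (simp add: dim_insert)
  ultimately have spanS: "span (insert w T) = S"
    by (rule subspace_dim_equal[OF subspace_span S])
  show ?thesis
  proof (rule that[OF w(1)])
    fix x assume "x \<in> S"
    then have "x \<in> span (insert w T)" by (simp add: spanS)
    then show "\<exists>c. x - c *\<^sub>R w \<in> T" by (simp add: span_breakdown_eq spanT)
  qed
qed

text \<open>If S/T is spanned by w0, then (S \<times> S)/(T \<times> T) is spanned over \<complex> by any w outside T \<times> T:
  the coefficient of x is (c + i e) / (a + i b), where w \<equiv> (a + i b) w0 and x \<equiv> (c + i e) w0.\<close>

lemma complex_codim_one_span:
  assumes T: "subspace T"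
    and w0: "\<And>x. x \<in> S \<Longrightarrow> \<exists>c. x - c *\<^sub>R w0 \<in> T"
    and w: "w \<in> S \<times> S" "w \<notin> T \<times> T" and x: "x \<in> S \<times> S"
  shows "\<exists>\<alpha> \<beta>. x - (\<alpha> *\<^sub>R w + \<beta> *\<^sub>R ii w) \<in> T \<times> T"
proof -
  obtain w1 w2 x1 x2 where wx: "w = (w1, w2)" "x = (x1, x2)" by (cases w, cases x)
  then have "w1 \<in> S" "w2 \<in> S" "x1 \<in> S" "x2 \<in> S" using w(1) x by auto
  then obtain a b c e where
    abce: "w1 - a *\<^sub>R w0 \<in> T" "w2 - b *\<^sub>R w0 \<in> T" "x1 - c *\<^sub>R w0 \<in> T" "x2 - e *\<^sub>R w0 \<in> T"
    using w0 by meson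
  have "a \<noteq> 0 \<or> b \<noteq> 0"
  proof (rule ccontr)
    assume "\<not> (a \<noteq> 0 \<or> b \<noteq> 0)"
    then have "w \<in> T \<times> T" using abce(1,2) wx by simp
    with w(2) show False ..
  qed
  define D where "D = a * a + b * b"
  have D: "D \<noteq> 0"
    using \<open>a \<noteq> 0 \<or> b \<noteq> 0\<close> unfolding D_def by simp
  define \<alpha> where "\<alpha> = (c * a + e * b) / D"
  define \<beta> where "\<beta> = (e * a - c * b) / D"
  have "c * D = (c * a + e * b) * a - (e * a - c * b) * b"
    "e * D = (c * a + e * b) * b + (e * a - c * b) * a"
    unfolding D_def by (simp_all add: algebra_simps)
  then have coeffs: "c = \<alpha> * a - \<beta> * b" "e = \<alpha> * b + \<beta> * a"
    unfolding \<alpha>_def \<beta>_def using D by (simp_all add: field_simps)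
  have "x1 - (\<alpha> *\<^sub>R w1 - \<beta> *\<^sub>R w2)
      = (x1 - c *\<^sub>R w0) - \<alpha> *\<^sub>R (w1 - a *\<^sub>R w0) + \<beta> *\<^sub>R (w2 - b *\<^sub>R w0)"
    by (simp add: coeffs algebra_simps)
  also have "\<dots> \<in> T"
    by (rule subspace_add[OF T subspace_diff[OF T abce(3) subspace_scale[OF T abce(1)]]
          subspace_scale[OF T abce(2)]])
  finally have 1: "x1 - (\<alpha> *\<^sub>R w1 - \<beta> *\<^sub>R w2) \<in> T" .
  have "x2 - (\<alpha> *\<^sub>R w2 + \<beta> *\<^sub>R w1)
      = (x2 - e *\<^sub>R w0) - \<alpha> *\<^sub>R (w2 - b *\<^sub>R w0) - \<beta> *\<^sub>R (w1 - a *\<^sub>R w0)"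
    by (simp add: coeffs algebra_simps)
  also have "\<dots> \<in> T"
    by (rule subspace_diff[OF T subspace_diff[OF T abce(4) subspace_scale[OF T abce(2)]]
          subspace_scale[OF T abce(1)]])
  finally have 2: "x2 - (\<alpha> *\<^sub>R w2 + \<beta> *\<^sub>R w1) \<in> T" .
  have "x - (\<alpha> *\<^sub>R w + \<beta> *\<^sub>R ii w) \<in> T \<times> T"
    using 1 2 by (simp add: wx ii_def)
  then show ?thesis by (intro exI)
qed

lemma dim_less_DIM_of_not_UNIV:
  fixes Q :: "'a::euclidean_space set"
  assumes "subspace Q" "Q \<noteq> UNIV"
  shows "dim Q < DIM('a)"
proof -
  have "dim Q \<noteq> DIM('a)"
    using assms dim_eq_full span_eq_iff by metis
  then show ?thesis using dim_subset_UNIV[of Q] by simp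
qed

section \<open>The lower central series\<close>

abbreviation lcsC :: "('a::euclidean_space \<Rightarrow> 'a \<Rightarrow> 'a) \<Rightarrow> nat \<Rightarrow> ('a \<times> 'a) set" where
  "lcsC br i \<equiv> lcs br i \<times> lcs br i"

lemma subspace_lcs: "subspace (lcs br i)"
  by (cases i) (auto simp: lcs.simps(2))

declare lcs.simps(2) [simp del]

lemma lcs_Suc_subsetI:
  "(\<And>x y. x \<in> lcs br i \<Longrightarrow> br x y \<in> S) \<Longrightarrow> subspace S \<Longrightarrow> lcs br (Suc i) \<subseteq> S"
  unfolding lcs.simps(2) by (rule span_minimal) blast+

lemma bracket_mem_lcs_Suc: "x \<in> lcs br i \<Longrightarrow> br x y \<in> lcs br (Suc i)"
  unfolding lcs.simps(2) by (auto intro: span_base)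

lemma lcs_Suc_subset: "lcs br (Suc i) \<subseteq> lcs br i"
proof (induction i)
  case (Suc i)
  then show ?case
    by (intro lcs_Suc_subsetI subspace_lcs) (auto intro: bracket_mem_lcs_Suc)
qed simp

lemma lcs_antimono: "i \<le> i' \<Longrightarrow> lcs br i' \<subseteq> lcs br i"
  by (induction rule: dec_induct) (use lcs_Suc_subset in blast)+


locale alternating_bracket =
  fixes br :: "'a::euclidean_space \<Rightarrow> 'a \<Rightarrow> 'a"
  assumes bilinear: "bilinear br" and alternating: "\<And>x. br x x = 0"
begin

lemmas br_linear = bilinear_ladd[OF bilinear] bilinear_radd[OF bilinear]
  bilinear_lmul[OF bilinear] bilinear_rmul[OF bilinear]
  bilinear_lneg[OF bilinear] bilinear_rneg[OF bilinear]
  bilinear_lsub[OF bilinear] bilinear_rsub[OF bilinear]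
  bilinear_lzero[OF bilinear] bilinear_rzero[OF bilinear]

lemma br_anticomm: "br x y = - br y x"
proof -
  have "br (x + y) (x + y) = 0" by (rule alternating)
  then have "br x y + br y x = 0"
    using alternating[of x] alternating[of y] by (simp add: br_linear add.commute)
  then show ?thesis by (simp add: eq_neg_iff_add_eq_0)
qed

lemma bracket_mem_lcs_Suc': "y \<in> lcs br i \<Longrightarrow> br x y \<in> lcs br (Suc i)"
  using br_anticomm[of x y] subspace_neg[OF subspace_lcs] bracket_mem_lcs_Suc by metis

lemma cbr_add_left: "cbr br (p + q) r = cbr br p r + cbr br q r"
  and cbr_add_right: "cbr br r (p + q) = cbr br r p + cbr br r q"
  and cbr_scaleR_right: "cbr br r (c *\<^sub>R p) = c *\<^sub>R cbr br r p"
  and cbr_ii_right: "cbr br p (ii q) = ii (cbr br p q)"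
  and cbr_cj: "cbr br (cj p) (cj q) = cj (cbr br p q)"
  and cbr_real: "cbr br (x, 0) (y, 0) = (br x y, 0)"
  by (simp_all add: cbr_def ii_def cj_def br_linear prod_eq_iff algebra_simps)

lemma cbr_lcsC_left: "p \<in> lcsC br i \<Longrightarrow> cbr br p q \<in> lcsC br (Suc i)"
  using subspace_lcs[of br "Suc i"]
  by (auto simp: cbr_def intro!: subspace_add subspace_diff bracket_mem_lcs_Suc)

lemma cbr_lcsC_right: "p \<in> lcsC br i \<Longrightarrow> cbr br q p \<in> lcsC br (Suc i)"
  using subspace_lcs[of br "Suc i"]
  by (auto simp: cbr_def intro!: subspace_add subspace_diff bracket_mem_lcs_Suc')

lemma lcs_Suc_subset_of_cbr:
  assumes "subspace S" "\<And>z x. x \<in> lcsC br i \<Longrightarrow> cbr br z x \<in> S \<times> S"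
  shows "lcs br (Suc i) \<subseteq> S"
proof (rule lcs_Suc_subsetI[OF _ assms(1)])
  fix x y assume "x \<in> lcs br i"
  then have "(x, 0) \<in> lcsC br i" using subspace_0[OF subspace_lcs] by blast
  then have "br y x \<in> S" using assms(2)[of "(x, 0)" "(y, 0)"] by (simp add: cbr_real)
  then show "br x y \<in> S" using br_anticomm[of x y] subspace_neg[OF assms(1)] by metis
qed

lemma lcsC_1_subset:
  assumes Q: "complex_subspace Q" and cbr_Q: "\<And>y z. cbr br y z \<in> Q"
  shows "lcsC br 1 \<subseteq> Q"
proof -
  have Qs: "subspace Q" and Qii: "\<And>p. p \<in> Q \<Longrightarrow> ii p \<in> Q"
    using Q by (auto simp: complex_subspace_def)
  have "linear (\<lambda>u::'a. (u, 0::'a))"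
    by (rule linearI) simp_all
  then have "subspace ((\<lambda>u. (u, 0)) -` Q)"
    by (rule linear_subspace_vimage[OF _ Qs])
  moreover have "br x y \<in> (\<lambda>u. (u, 0)) -` Q" for x y
    using cbr_Q[of "(x, 0)" "(y, 0)"] by (simp add: cbr_real)
  ultimately have real: "lcs br (Suc 0) \<subseteq> (\<lambda>u. (u, 0)) -` Q"
    by (intro lcs_Suc_subsetI) auto
  show ?thesis
  proof clarify
    fix u v assume "u \<in> lcs br 1" "v \<in> lcs br 1"
    then have "(u, 0) \<in> Q" "ii (v, 0) \<in> Q" using real Qii by auto
    moreover have "(u, v) = (u, 0) + ii (v, 0)" by (simp add: ii_def)
    ultimately show "(u, v) \<in> Q" using subspace_add[OF Qs] by metis
  qed
qed

end

locale nilpotent_bracket = alternating_bracket +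
  fixes m :: nat
  assumes lcs_nilindex: "lcs br m = {0}"
begin

lemma lcs_eq_0: "m \<le> i \<Longrightarrow> lcs br i = {0}"
  using lcs_antimono[of m i br] lcs_nilindex subspace_0[OF subspace_lcs[of br i]] by blast

lemma lcs_eq_0_of_Suc_supset:
  assumes "lcs br i \<subseteq> lcs br (Suc i)"
  shows "lcs br i = {0}"
proof -
  have stable: "lcs br (Suc i) = lcs br i"
    using assms lcs_Suc_subset by blast
  have "lcs br (i + t) = lcs br i" for t
  proof (induction t)
    case (Suc t)
    then have "lcs br (Suc (i + t)) = lcs br (Suc i)" by (simp only: lcs.simps(2))
    then show ?case using stable by simp
  qed simp
  then show ?thesis using lcs_eq_0[of "i + m"] by simp
qed

lemma dim_lcs_Suc_less:
  assumes "lcs br i \<noteq> {0}"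
  shows "dim (lcs br (Suc i)) < dim (lcs br i)"
proof (rule dim_psubset)
  have "lcs br (Suc i) \<noteq> lcs br i"
    using lcs_eq_0_of_Suc_supset assms by force
  then have "lcs br (Suc i) \<subset> lcs br i"
    using lcs_Suc_subset by blast
  then show "span (lcs br (Suc i)) \<subset> span (lcs br i)"
    by (simp add: span_eq_iff[THEN iffD2, OF subspace_lcs])
qed

text \<open>A codimension-one lcs 1 would make g = span {w} + lcs 1, hence lcs 1 = lcs 2.\<close>

lemma dim_lcs_1_le:
  assumes "2 \<le> DIM('a)"
  shows "dim (lcs br 1) + 2 \<le> DIM('a)"
proof (rule ccontr)
  assume "\<not> ?thesis"
  moreover have "dim (lcs br (Suc 0)) < dim (lcs br 0)"
    using dim_lcs_Suc_less[of 0] assms by (auto simp: Euclidean_Space.dim_UNIV)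
  ultimately have codim: "dim (lcs br 0) = dim (lcs br (Suc 0)) + 1"
    by (simp add: Euclidean_Space.dim_UNIV)
  obtain w where w: "\<And>x. \<exists>c. x - c *\<^sub>R w \<in> lcs br (Suc 0)"
    using obtain_codim_one_generator[OF subspace_lcs subspace_lcs lcs_Suc_subset codim] by auto
  have "lcs br (Suc 0) \<subseteq> lcs br (Suc (Suc 0))"
  proof (rule lcs_Suc_subsetI[OF _ subspace_lcs])
    fix x y :: 'a
    obtain c e where c: "x - c *\<^sub>R w \<in> lcs br (Suc 0)" and e: "y - e *\<^sub>R w \<in> lcs br (Suc 0)"
      using w by blast
    have "br x y = br (x - c *\<^sub>R w) y + c *\<^sub>R br w (y - e *\<^sub>R w)"
      by (simp add: br_linear alternating)
    also have "\<dots> \<in> lcs br (Suc (Suc 0))"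
      by (rule subspace_add[OF subspace_lcs bracket_mem_lcs_Suc[OF c]
            subspace_scale[OF subspace_lcs bracket_mem_lcs_Suc'[OF e]]])
    finally show "br x y \<in> lcs br (Suc (Suc 0))" .
  qed
  then have "lcs br (Suc 0) = {0}" by (rule lcs_eq_0_of_Suc_supset)
  then show False using codim assms by (simp add: Euclidean_Space.dim_UNIV)
qed

text \<open>With i the last index such that lcsC br i \<not>\<subseteq> Q, any x \<in> lcsC br i - Q spans together with
  ii x a complement of Q, so every element is in lcsC br i + Q, and brackets of such sums
  land in lcsC br (Suc i) + Q \<subseteq> Q.\<close>

lemma cbr_mem_of_codim_2:
  assumes Q: "complex_subalgebra br Q" and big: "DIM('a \<times> 'a) \<le> dim Q + 2"
  shows "cbr br y z \<in> Q"
proof (cases "Q = UNIV")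
  case False
  have Qs: "subspace Q" and Qii: "\<And>p. p \<in> Q \<Longrightarrow> ii p \<in> Q"
    and Qcbr: "\<And>p q. p \<in> Q \<Longrightarrow> q \<in> Q \<Longrightarrow> cbr br p q \<in> Q"
    using Q by (auto simp: complex_subalgebra_def complex_subspace_def)
  have "lcsC br m \<subseteq> Q" using lcs_nilindex subspace_0[OF Qs] by (simp add: zero_prod_def)
  moreover have "\<not> lcsC br 0 \<subseteq> Q" using False by auto
  ultimately obtain i where "\<not> lcsC br i \<subseteq> Q" and GQ: "lcsC br (Suc i) \<subseteq> Q"
    using exists_last_index[of 0 m "\<lambda>i. \<not> lcsC br i \<subseteq> Q"] by blast
  then obtain x where x: "x \<in> lcsC br i" "x \<notin> Q"
    by blast
  have spanQ: "span Q = Q" by (rule span_eq_iff[THEN iffD2, OF Qs])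
  have "ii x \<notin> span (insert x Q)"
    using ii_notin_span_insert[OF _ x(2)] Q by (simp add: complex_subalgebra_def)
  then have "dim (span (insert (ii x) (insert x Q))) = dim Q + 2"
    using x(2) by (simp add: dim_insert spanQ)
  then have full: "span (insert (ii x) (insert x Q)) = UNIV"
    using big by (intro subspace_dim_equal subspace_span subspace_UNIV) simp_all
  have split: "\<exists>X q. X \<in> lcsC br i \<and> q \<in> Q \<and> y = X + q" for y
  proof -
    have "y \<in> span (insert (ii x) (insert x Q))" by (simp add: full)
    then obtain c1 where "y - c1 *\<^sub>R ii x \<in> span (insert x Q)"
      by (subst (asm) span_breakdown_eq) (erule exE)
    then obtain c2 where q: "y - c1 *\<^sub>R ii x - c2 *\<^sub>R x \<in> span Q"
      by (subst (asm) span_breakdown_eq) (erule exE)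
    have G: "subspace (lcsC br i)" by (rule subspace_Times[OF subspace_lcs subspace_lcs])
    show ?thesis
    proof (intro exI conjI)
      show "c1 *\<^sub>R ii x + c2 *\<^sub>R x \<in> lcsC br i"
        by (rule subspace_add[OF G subspace_scale[OF G ii_mem_Times[OF x(1) subspace_lcs]]
              subspace_scale[OF G x(1)]])
      show "y - c1 *\<^sub>R ii x - c2 *\<^sub>R x \<in> Q" using q by (simp only: spanQ)
      show "y = (c1 *\<^sub>R ii x + c2 *\<^sub>R x) + (y - c1 *\<^sub>R ii x - c2 *\<^sub>R x)"
        by (simp add: algebra_simps)
    qed
  qed
  obtain Y q where Y: "Y \<in> lcsC br i" "q \<in> Q" "y = Y + q" using split by blast
  obtain Z q' where Z: "Z \<in> lcsC br i" "q' \<in> Q" "z = Z + q'" using split by blast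
  have "cbr br y z = cbr br Y z + cbr br q Z + cbr br q q'"
    unfolding Y(3) Z(3) by (simp add: cbr_add_left cbr_add_right)
  moreover have "cbr br Y z \<in> Q" "cbr br q Z \<in> Q"
    using cbr_lcsC_left[OF Y(1)] cbr_lcsC_right[OF Z(1)] GQ by blast+
  ultimately show ?thesis
    using Qcbr[OF Y(2) Z(2)] subspace_add[OF Qs] by metis
qed simp

lemma complex_subalgebra_codim_2:
  assumes "complex_subalgebra br Q" "DIM('a \<times> 'a) \<le> dim Q + 2"
  shows "lcsC br 1 \<subseteq> Q"
proof (rule lcsC_1_subset)
  show "complex_subspace Q" using assms(1) by (simp add: complex_subalgebra_def)
  show "\<And>y z. cbr br y z \<in> Q" by (rule cbr_mem_of_codim_2[OF assms])
qed

lemma dim_lcs_2_le: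
  assumes "3 \<le> DIM('a)"
  shows "dim (lcs br 2) + 3 \<le> DIM('a)"
  unfolding numeral_2_eq_2 One_nat_def[symmetric]
proof (cases "lcs br 1 = {0}")
  case True
  then have "lcs br (Suc 1) = {0}"
    using lcs_Suc_subset[of br 1] subspace_0[OF subspace_lcs[of br "Suc 1"]] by blast
  then show "dim (lcs br (Suc 1)) + 3 \<le> DIM('a)" using assms by simp
next
  case False
  then have "dim (lcs br (Suc 1)) < dim (lcs br 1)" by (rule dim_lcs_Suc_less)
  then show "dim (lcs br (Suc 1)) + 3 \<le> DIM('a)" using dim_lcs_1_le assms by simp
qed

end

locale one_dim_tail = nilpotent_bracket +
  fixes j :: nat
  assumes j_pos: "0 < j"
    and dim_lcs_step: "\<And>i. j \<le> i \<Longrightarrow> i < m \<Longrightarrow> dim (lcs br i) = dim (lcs br (Suc i)) + 1"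
begin

lemma lcs_not_subset_Suc:
  assumes "j \<le> i" "i < m"
  shows "\<not> lcs br i \<subseteq> lcs br (Suc i)"
proof
  assume "lcs br i \<subseteq> lcs br (Suc i)"
  then have "dim (lcs br i) \<le> dim (lcs br (Suc i))" by (rule dim_subset)
  with dim_lcs_step[OF assms] show False by simp
qed

lemma dim_lcs: "j \<le> i \<Longrightarrow> dim (lcs br i) = m - i"
proof (induction "m - i" arbitrary: i)
  case 0
  then show ?case using lcs_eq_0[of i] by simp
next
  case (Suc t)
  then have "i < m" by simp
  then show ?case using Suc dim_lcs_step[OF Suc.prems \<open>i < m\<close>] by simp
qed

lemma lcsC_layer_span:
  assumes "j \<le> i" "i < m" "w \<in> lcsC br i" "w \<notin> lcsC br (Suc i)" "x \<in> lcsC br i"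
  shows "\<exists>\<alpha> \<beta>. x - (\<alpha> *\<^sub>R w + \<beta> *\<^sub>R ii w) \<in> lcsC br (Suc i)"
proof -
  obtain w0 where "\<And>x. x \<in> lcs br i \<Longrightarrow> \<exists>c. x - c *\<^sub>R w0 \<in> lcs br (Suc i)"
    using obtain_codim_one_generator[OF subspace_lcs subspace_lcs lcs_Suc_subset
        dim_lcs_step[OF assms(1,2)]] by blast
  then show ?thesis
    using complex_codim_one_span[OF subspace_lcs _ assms(3-5)] by blast
qed

end

section \<open>Complex subalgebras transverse to their conjugate\<close>

locale gc_projection = one_dim_tail +
  fixes P :: "('a::euclidean_space \<times> 'a) set"
  assumes P_subalgebra: "complex_subalgebra br P"
    and P_plus_conj: "\<And>x. \<exists>p\<in>P. \<exists>q\<in>P. x = p + cj q"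
begin

lemma P_subspace: "subspace P"
  and P_ii: "p \<in> P \<Longrightarrow> ii p \<in> P"
  and P_cbr: "p \<in> P \<Longrightarrow> q \<in> P \<Longrightarrow> cbr br p q \<in> P"
  using P_subalgebra by (auto simp: complex_subalgebra_def complex_subspace_def)

text \<open>Since P + cj P is everything, brackets with P control brackets with all of g \<otimes> \<complex>.\<close>

lemma cbr_mem_of_cbr_P:
  assumes S: "subspace S" and X: "\<And>x. x \<in> X \<Longrightarrow> cj x \<in> X"
    and PX: "\<And>p x. p \<in> P \<Longrightarrow> x \<in> X \<Longrightarrow> cbr br p x \<in> S \<times> S" and x: "x \<in> X"
  shows "cbr br z x \<in> S \<times> S"
proof -
  obtain p q where pq: "p \<in> P" "q \<in> P" "z = p + cj q" using P_plus_conj by blast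
  have "cbr br (cj q) x = cj (cbr br q (cj x))"
    using cbr_cj[of q "cj x"] by simp
  then have "cbr br z x = cbr br p x + cj (cbr br q (cj x))"
    by (simp add: pq(3) cbr_add_left)
  also have "\<dots> \<in> S \<times> S"
    by (rule subspace_add[OF subspace_Times[OF S S] PX[OF pq(1) x]
          cj_mem_Times[OF PX[OF pq(2) X[OF x]] S]])
  finally show ?thesis .
qed

lemma ex_P_cbr_notin_lcsC:
  assumes "j \<le> i" "Suc i < m" "w \<in> lcsC br i" "w \<notin> lcsC br (Suc i)"
  shows "\<exists>p\<in>P. cbr br p w \<notin> lcsC br (Suc (Suc i))"
proof (rule ccontr)
  assume "\<not> ?thesis"
  then have H: "\<And>p. p \<in> P \<Longrightarrow> cbr br p w \<in> lcsC br (Suc (Suc i))" by blast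
  have G2: "subspace (lcsC br (Suc (Suc i)))" by (rule subspace_Times[OF subspace_lcs subspace_lcs])
  have PX: "cbr br p x \<in> lcsC br (Suc (Suc i))" if p: "p \<in> P" and x: "x \<in> lcsC br i" for p x
  proof -
    obtain \<alpha> \<beta> where U: "x - (\<alpha> *\<^sub>R w + \<beta> *\<^sub>R ii w) \<in> lcsC br (Suc i)"
      using lcsC_layer_span[OF assms(1) Suc_lessD[OF assms(2)] assms(3,4) x] by (elim exE)
    have "cbr br p x = cbr br p ((\<alpha> *\<^sub>R w + \<beta> *\<^sub>R ii w) + (x - (\<alpha> *\<^sub>R w + \<beta> *\<^sub>R ii w)))"
      by simp
    also have "\<dots> = \<alpha> *\<^sub>R cbr br p w + \<beta> *\<^sub>R ii (cbr br p w)
        + cbr br p (x - (\<alpha> *\<^sub>R w + \<beta> *\<^sub>R ii w))"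
      by (simp only: cbr_add_right cbr_scaleR_right cbr_ii_right)
    also have "\<dots> \<in> lcsC br (Suc (Suc i))"
      by (rule subspace_add[OF G2 subspace_add[OF G2 subspace_scale[OF G2 H[OF p]]
            subspace_scale[OF G2 ii_mem_Times[OF H[OF p] subspace_lcs]]] cbr_lcsC_right[OF U]])
    finally show ?thesis .
  qed
  have "cbr br z x \<in> lcsC br (Suc (Suc i))" if "x \<in> lcsC br i" for z x
    by (rule cbr_mem_of_cbr_P[OF subspace_lcs cj_mem_Times[OF _ subspace_lcs] PX that])
  then have "lcs br (Suc i) \<subseteq> lcs br (Suc (Suc i))"
    by (rule lcs_Suc_subset_of_cbr[OF subspace_lcs])
  then show False using lcs_not_subset_Suc[of "Suc i"] assms(1,2) by simp
qed

text \<open>Bracketing with P moves w down one layer at a time, so by induction from the bottom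
  P contains lcsC br (Suc i); modulo that, w and ii w span lcsC br i.\<close>

lemma lcsC_subset_P:
  assumes "j \<le> i" "w \<in> P" "w \<in> lcsC br i" "w \<notin> lcsC br (Suc i)"
  shows "lcsC br i \<subseteq> P"
  using assms
proof (induction "m - i" arbitrary: i w rule: less_induct)
  case less
  have "i < m"
  proof (rule ccontr)
    assume "\<not> i < m"
    then have "lcs br i = {0}" "lcs br (Suc i) = {0}" using lcs_eq_0 by auto
    then show False using less.prems(3,4) by simp
  qed
  have tail: "lcsC br (Suc i) \<subseteq> P"
  proof (cases "Suc i < m")
    case True
    then obtain p where p: "p \<in> P" "cbr br p w \<notin> lcsC br (Suc (Suc i))"
      using ex_P_cbr_notin_lcsC less.prems by blast
    show ?thesis
    proof (rule less.hyps)
      show "m - Suc i < m - i" using \<open>i < m\<close> by simp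
      show "j \<le> Suc i" using less.prems(1) by simp
      show "cbr br p w \<in> P" by (rule P_cbr[OF p(1) less.prems(2)])
      show "cbr br p w \<in> lcsC br (Suc i)" by (rule cbr_lcsC_right[OF less.prems(3)])
      show "cbr br p w \<notin> lcsC br (Suc (Suc i))" by (rule p(2))
    qed
  next
    case False
    then show ?thesis
      using lcs_eq_0[of "Suc i"] subspace_0[OF P_subspace] by (simp add: zero_prod_def)
  qed
  show ?case
  proof
    fix x assume x: "x \<in> lcsC br i"
    obtain \<alpha> \<beta> where "x - (\<alpha> *\<^sub>R w + \<beta> *\<^sub>R ii w) \<in> lcsC br (Suc i)"
      using lcsC_layer_span[OF less.prems(1) \<open>i < m\<close> less.prems(3,4) x] by (elim exE)
    then have U: "x - (\<alpha> *\<^sub>R w + \<beta> *\<^sub>R ii w) \<in> P" by (rule subsetD[OF tail])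
    have "\<alpha> *\<^sub>R w + \<beta> *\<^sub>R ii w \<in> P"
      by (rule subspace_add[OF P_subspace subspace_scale[OF P_subspace less.prems(2)]
            subspace_scale[OF P_subspace P_ii[OF less.prems(2)]]])
    from subspace_add[OF P_subspace this U] show "x \<in> P" by simp
  qed
qed

lemma P_inter_lcsC_subset_conj: "P \<inter> lcsC br j \<subseteq> cj ` P"
proof
  fix w assume w: "w \<in> P \<inter> lcsC br j"
  show "w \<in> cj ` P"
  proof (cases "w = 0")
    case True
    then have "w = cj 0" by (simp add: cj_def zero_prod_def)
    then show ?thesis by (rule image_eqI[OF _ subspace_0[OF P_subspace]])
  next
    case False
    then have "j < m" using w lcs_eq_0[of j] by (auto simp: zero_prod_def)
    moreover have "w \<notin> lcsC br m" using False lcs_nilindex by (auto simp: zero_prod_def)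
    ultimately obtain i where i: "j \<le> i" "w \<in> lcsC br i" "w \<notin> lcsC br (Suc i)"
      using exists_last_index[of j m "\<lambda>i. w \<in> lcsC br i"] IntD2[OF w] by (auto simp del: mem_Times_iff)
    have "cj w \<in> P"
      by (rule subsetD[OF lcsC_subset_P[OF i(1) IntD1[OF w] i(2,3)] cj_mem_Times[OF i(2) subspace_lcs]])
    then show ?thesis by (rule image_eqI[rotated]) simp
  qed
qed

lemma lcsC_subset_P_of_sums:
  assumes sums: "lcsC br (j - 1) \<subseteq> {p + y | p y. p \<in> P \<and> y \<in> lcsC br j}"
  shows "lcsC br j \<subseteq> P"
proof (rule ccontr)
  assume nP: "\<not> lcsC br j \<subseteq> P"
  have "j < m"
  proof (rule ccontr)
    assume "\<not> j < m"
    then have "lcsC br j = {0}" using lcs_eq_0[of j] by (simp add: zero_prod_def)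
    then show False using nP subspace_0[OF P_subspace] by simp
  qed
  have PG: "w \<in> lcsC br (Suc j)" if "w \<in> P" "w \<in> lcsC br j" for w
    using lcsC_subset_P[OF order_refl that] nP by blast
  have jj: "Suc (j - 1) = j" using j_pos by simp
  have G: "subspace (lcsC br (j - 1))" "subspace (lcsC br (Suc j))"
    by (simp_all add: subspace_Times subspace_lcs)
  have PX: "cbr br p x \<in> lcsC br (Suc j)" if p: "p \<in> P" and x: "x \<in> lcsC br (j - 1)" for p x
  proof -
    obtain a y where a: "a \<in> P" and y: "y \<in> lcsC br j" and xay: "x = a + y"
      using subsetD[OF sums x] by blast
    have "y \<in> lcsC br (j - 1)" using y lcs_antimono[of "j - 1" j br] by auto
    then have "a \<in> lcsC br (j - 1)"
      using subspace_diff[OF G(1) x] xay by (metis add_diff_cancel_right')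
    then have "cbr br p a \<in> lcsC br (Suc j)"
      using PG[OF P_cbr[OF p a]] cbr_lcsC_right[of a "j - 1"] jj by simp
    moreover have "cbr br p y \<in> lcsC br (Suc j)" by (rule cbr_lcsC_right[OF y])
    ultimately show ?thesis
      unfolding xay cbr_add_right by (rule subspace_add[OF G(2)])
  qed
  have "cbr br z x \<in> lcsC br (Suc j)" if "x \<in> lcsC br (j - 1)" for z x
    by (rule cbr_mem_of_cbr_P[OF subspace_lcs cj_mem_Times[OF _ subspace_lcs] PX that])
  then have "lcs br (Suc (j - 1)) \<subseteq> lcs br (Suc j)"
    by (rule lcs_Suc_subset_of_cbr[OF subspace_lcs])
  then show False using lcs_not_subset_Suc[OF order_refl \<open>j < m\<close>] jj by simp
qed

lemma dim_P_inter_conj: "2 * DIM('a) + dim (P \<inter> cj ` P) = 2 * dim P"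
proof -
  have cjP: "subspace (cj ` P)" by (rule linear_subspace_image[OF linear_cj P_subspace])
  have "dim (cj ` P) = dim P"
    by (rule dim_image_eq[OF linear_cj]) (metis cj_cj inj_on_inverseI)
  moreover have "{x + y | x y. x \<in> P \<and> y \<in> cj ` P} = UNIV"
    using P_plus_conj by blast
  ultimately show ?thesis
    using dim_sums_Int[OF P_subspace cjP] by (simp add: Euclidean_Space.dim_UNIV)
qed

lemma dim_lcsC: "dim (lcsC br j) = 2 * (m - j)"
  using dim_Times[OF subspace_lcs subspace_lcs, of br j br j] dim_lcs[OF order_refl] by simp

lemma dim_P_ge_of_lcsC_subset:
  assumes "lcsC br j \<subseteq> P"
  shows "DIM('a) + (m - j) \<le> dim P"
proof -
  have "lcsC br j \<subseteq> P \<inter> cj ` P"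
  proof
    fix x assume x: "x \<in> lcsC br j"
    have "cj x \<in> P" by (rule subsetD[OF assms cj_mem_Times[OF x subspace_lcs]])
    then have "x \<in> cj ` P" by (rule image_eqI[rotated]) simp
    then show "x \<in> P \<inter> cj ` P" using subsetD[OF assms x] by blast
  qed
  then have "dim (lcsC br j) \<le> dim (P \<inter> cj ` P)" by (rule dim_subset)
  then show ?thesis using dim_P_inter_conj dim_lcsC by simp
qed

lemma obtain_enlarged_subalgebra:
  assumes "\<not> lcsC br j \<subseteq> P"
  obtains Q where "complex_subalgebra br Q" "\<not> lcsC br (j - 1) \<subseteq> Q"
    "2 * DIM('a) + 2 * (m - j) \<le> dim P + dim Q"
proof
  define Q where "Q = {p + y | p y. p \<in> P \<and> y \<in> lcsC br j}"
  have G: "subspace (lcsC br j)" by (simp add: subspace_Times subspace_lcs)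
  have Qs: "complex_subspace Q"
    unfolding Q_def using P_subalgebra G
    by (intro complex_subspace_sums complex_subspace_Times subspace_lcs)
      (simp add: complex_subalgebra_def)
  have "cbr br q q' \<in> Q" if "q \<in> Q" "q' \<in> Q" for q q'
  proof -
    obtain x y where x: "x \<in> P" and y: "y \<in> lcsC br j" and q: "q = x + y"
      using \<open>q \<in> Q\<close> unfolding Q_def by blast
    obtain x' y' where x': "x' \<in> P" and y': "y' \<in> lcsC br j" and q': "q' = x' + y'"
      using \<open>q' \<in> Q\<close> unfolding Q_def by blast
    have down: "lcsC br (Suc j) \<subseteq> lcsC br j" using lcs_Suc_subset[of br j] by auto
    have rest: "cbr br x y' + cbr br y q' \<in> lcsC br j"
      using subsetD[OF down cbr_lcsC_right[OF y']] subsetD[OF down cbr_lcsC_left[OF y]]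
      by (rule subspace_add[OF G])
    have eq: "cbr br q q' = cbr br x x' + (cbr br x y' + cbr br y q')"
      by (simp add: q q' cbr_add_left cbr_add_right algebra_simps)
    show ?thesis
      unfolding Q_def by (rule CollectI, rule exI, rule exI, rule conjI[OF eq conjI[OF P_cbr[OF x x'] rest]])
  qed
  with Qs show "complex_subalgebra br Q" by (simp add: complex_subalgebra_def)
  show "\<not> lcsC br (j - 1) \<subseteq> Q"
    using lcsC_subset_P_of_sums assms unfolding Q_def by blast
  have "dim Q + dim (P \<inter> lcsC br j) = dim P + 2 * (m - j)"
    unfolding Q_def using dim_sums_Int[OF P_subspace G] dim_lcsC by simp
  moreover have "dim (P \<inter> lcsC br j) \<le> dim (P \<inter> cj ` P)"
    using P_inter_lcsC_subset_conj by (intro dim_subset) blast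
  ultimately show "2 * DIM('a) + 2 * (m - j) \<le> dim P + dim Q"
    using dim_P_inter_conj by linarith
qed

lemma dim_P_lower_bound:
  assumes "2 \<le> DIM('a)"
  shows "2 * (m - j) + 2 \<le> dim P"
proof (cases "lcsC br j \<subseteq> P")
  case True
  have "m - j = dim (lcs br j)" by (simp add: dim_lcs)
  also have "\<dots> \<le> dim (lcs br 1)"
    using j_pos by (intro dim_subset lcs_antimono) simp
  finally show ?thesis
    using dim_lcs_1_le[OF assms] dim_P_ge_of_lcsC_subset[OF True] by linarith
next
  case False
  then obtain Q where Q: "complex_subalgebra br Q" "\<not> lcsC br (j - 1) \<subseteq> Q"
    and dims: "2 * DIM('a) + 2 * (m - j) \<le> dim P + dim Q"
    by (rule obtain_enlarged_subalgebra)
  have Qc: "complex_subspace Q" using Q(1) by (simp add: complex_subalgebra_def)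
  have "Q \<noteq> UNIV" using Q(2) by auto
  then have "dim Q < DIM('a \<times> 'a)"
    using Qc by (intro dim_less_DIM_of_not_UNIV) (simp_all add: complex_subspace_def)
  moreover have "even (dim Q)" by (rule even_dim_complex_subspace[OF Qc])
  ultimately show ?thesis using dims by auto presburger
qed

lemma dim_P_lower_bound_tail:
  assumes "4 \<le> DIM('a)" "1 < j"
  shows "2 * (m - j) + 4 \<le> dim P"
proof -
  have "even (dim P)"
    using P_subalgebra by (simp add: complex_subalgebra_def even_dim_complex_subspace)
  show ?thesis
  proof (cases "lcsC br j \<subseteq> P")
    case True
    have "m - j = dim (lcs br j)" by (simp add: dim_lcs)
    also have "\<dots> \<le> dim (lcs br 2)"
      using assms(2) by (intro dim_subset lcs_antimono) simp
    finally show ?thesis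
      using dim_lcs_2_le assms(1) dim_P_ge_of_lcsC_subset[OF True] \<open>even (dim P)\<close>
      by presburger
  next
    case False
    then obtain Q where Q: "complex_subalgebra br Q" "\<not> lcsC br (j - 1) \<subseteq> Q"
      and dims: "2 * DIM('a) + 2 * (m - j) \<le> dim P + dim Q"
      by (rule obtain_enlarged_subalgebra)
    have "lcs br (j - 1) \<subseteq> lcs br 1"
      using assms(2) by (intro lcs_antimono) simp
    then have "lcsC br (j - 1) \<subseteq> lcsC br 1" by blast
    then have "\<not> DIM('a \<times> 'a) \<le> dim Q + 2"
      using complex_subalgebra_codim_2[OF Q(1)] Q(2) by blast
    moreover have "even (dim Q)"
      using Q(1) by (simp add: complex_subalgebra_def even_dim_complex_subspace)
    ultimately show ?thesis using dims by auto presburger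
  qed
qed

end

section \<open>Generalized complex structures\<close>

lemma dim_annV_add_dim_lcs:
  fixes br :: "'a::euclidean_space \<Rightarrow> 'a \<Rightarrow> 'a"
  shows "dim (annV br i) + dim (lcs br i) = DIM('a)"
proof -
  have "annV br i = {y \<in> UNIV. \<forall>x\<in>lcs br i. orthogonal x y}"
    unfolding annV_def orthogonal_def by (auto simp: inner_commute)
  then show ?thesis
    using dim_subspace_orthogonal_to_vectors[OF subspace_lcs subspace_UNIV, of br i] by simp
qed

lemma dim_lcs_step_of_annV:
  "dim (annV br (Suc i)) - dim (annV br i) = 1 \<Longrightarrow> dim (lcs br i) = dim (lcs br (Suc i)) + 1"
  using dim_annV_add_dim_lcs[of br i] dim_annV_add_dim_lcs[of br "Suc i"] by linarith

lemma projL_eq: "projL J = range (\<lambda>u. (fst u, - fst (J u)))"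
proof -
  have "eigL J = range (\<lambda>u. (u, - J u))" unfolding eigL_def by auto
  then show ?thesis unfolding projL_def by (simp add: image_image)
qed

lemma projL_fst_surj: "\<exists>b. (a, b) \<in> projL J"
  unfolding projL_eq by (rule exI[of _ "- fst (J (a, 0))"]) (rule range_eqI[of _ _ "(a, 0)"], simp)

text \<open>The g-part of the Courant bracket is the Lie bracket, so projecting L to g \<otimes> \<complex>
  turns ccourant into cbr.\<close>

lemma complex_subalgebra_projL:
  assumes gcs: "gen_complex_structure br J"
  shows "complex_subalgebra br (projL J)"
proof -
  define f where "f u = (fst u, - fst (J u))" for u
  have P: "projL J = range f" unfolding projL_eq f_def ..
  have linJ: "linear J" and JJ: "\<And>u. J (J u) = - u"
    and clos: "\<And>p q. p \<in> eigL J \<Longrightarrow> q \<in> eigL J \<Longrightarrow> ccourant br p q \<in> eigL J"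
    using gcs unfolding gen_complex_structure_def by blast+
  have "linear f"
    unfolding f_def by (rule linearI) (auto simp: linear_add[OF linJ] linear_scale[OF linJ])
  then have "subspace (projL J)" unfolding P by (rule linear_subspace_image[OF _ subspace_UNIV])
  moreover have "ii (f u) \<in> range f" for u
  proof -
    have "ii (f u) = f (J u)" by (simp add: f_def ii_def JJ)
    then show ?thesis by simp
  qed
  moreover have "cbr br (f u) (f v) \<in> range f" for u v
  proof -
    have "ccourant br (u, - J u) (v, - J v) \<in> eigL J"
      using clos unfolding eigL_def by blast
    then obtain w where w: "ccourant br (u, - J u) (v, - J v) = (w, - J w)"
      unfolding eigL_def by blast
    have "fst (fst (ccourant br (u, - J u) (v, - J v))) = fst w"
      "fst (snd (ccourant br (u, - J u) (v, - J v))) = - fst (J w)"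
      using w by simp_all
    then have "cbr br (f u) (f v) = f w"
      unfolding f_def cbr_def by (simp add: ccourant_def courant_def)
    then show ?thesis by simp
  qed
  ultimately show ?thesis
    unfolding complex_subalgebra_def complex_subspace_def P by blast
qed

theorem theorem2:
  fixes br :: "'a::euclidean_space \<Rightarrow> 'a \<Rightarrow> 'a"
    and J :: "'a \<times> 'a \<Rightarrow> 'a \<times> 'a"
    and n k j :: nat
  assumes "lie_algebra br"
    and "nilpotent_lie br"
    and "DIM('a) = 2 * n"
    and "gen_complex_structure br J"
    and "k = gc_type J"
    and "k > 1"
    and "j > 0"
    and "\<forall>i. j \<le> i \<and> i \<le> nilindex br - 1 \<longrightarrow>
              dim (annV br (i + 1)) - dim (annV br i) = 1"
  shows "(j > 1 \<longrightarrow> int k \<le> 2 * int n - int (nilindex br) + int j - 2) \<and>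
         (j = 1 \<longrightarrow> int k \<le> 2 * int n - int (nilindex br))"
proof -
  define m where "m = nilindex br"
  define R where "R = dim (projL J)"
  interpret gc_projection br m j "projL J"
  proof
    show "bilinear br" "\<And>x. br x x = 0" using assms(1) by (simp_all add: lie_algebra_def)
    show "lcs br m = {0}"
      using assms(2) unfolding nilpotent_lie_def m_def nilindex_def by (rule LeastI_ex)
    show "0 < j" by (rule assms(7))
    show "dim (lcs br i) = dim (lcs br (Suc i)) + 1" if "j \<le> i" "i < m" for i
      using assms(8) that by (intro dim_lcs_step_of_annV) (simp add: m_def)
    show "complex_subalgebra br (projL J)" by (rule complex_subalgebra_projL[OF assms(4)])
    show "\<exists>p\<in>projL J. \<exists>q\<in>projL J. x = p + cj q" for x
      using complex_subalgebra_projL[OF assms(4)] projL_fst_surj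
      by (intro complex_subspace_plus_conj) (simp_all add: complex_subalgebra_def)
  qed
  have k: "k = 2 * n - R div 2" using assms(3,5) by (simp add: gc_type_def R_def)
  have "2 * n \<le> R" "R \<le> 4 * n"
    using dim_P_inter_conj dim_subset_UNIV[of "projL J"] assms(3) by (simp_all add: R_def)
  then have "2 \<le> n" using k assms(6) by linarith
  then have "2 * (m - j) + 2 \<le> R" "1 < j \<Longrightarrow> 2 * (m - j) + 4 \<le> R"
    using dim_P_lower_bound dim_P_lower_bound_tail assms(3) by (simp_all add: R_def)
  then show ?thesis
    unfolding m_def[symmetric] using k \<open>R \<le> 4 * n\<close> by auto
qed

end
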